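(* Consider the closed-loop system described in the context, with the controller given by the Hamiltonian parameterization $a=J_0R+bJb^{T}J_0/2$, $c=J_2\mathbf{I}^{T}b^{T}J_0$ for fixed $b$, and suppose $\mathcal{A}$ is Hurwitz. Then the second Fréchet derivative of $E$ with respect to $R\in\mathbb{S}_n$ is the self-adjoint operator on $\mathbb{S}_n$ $$\partial_R^2E=4\,\mathcal{J}^{\dagger}\big(\mathcal{Q}\mathcal{L}_{\mathcal{A}}\mathcal{S}\mathcal{P}+\mathcal{P}\mathcal{L}_{\mathcal{A}^{T}}\mathcal{S}\mathcal{Q}\big)\mathcal{J},$$ where $\mathcal{J}:\mathbb{S}_n\to\mathbb{R}^{2n\times2n}$, $\mathcal{J}(M):=\begin{bmatrix}0_n\\ J_0\end{bmatrix}M\begin{bmatrix}0_n & I_n\end{bmatrix}$, $\mathcal{J}^{\dagger}$ is its adjoint with respect to the Frobenius inner products, $\mathcal{Q}(X):=QX$ and $\mathcal{P}(X):=XP$ for $X\in\mathbb{R}^{2n\times 2n}$, $\mathcal{S}(X):=(X+X^{T})/2$, and for a Hurwitz matrix $F$, $\mathcal{L}_F(M):=\int_0^{+\infty}e^{Ft}Me^{F^{T}t}\,dt$ (the unique solution $N$ of $FN+NF^{T}+M=0$).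
   Context: Let $n=2\nu$, $m_1=2\mu_1$, $m_2=2\mu_2$, and let $p,p_0$ be positive integers. Plant matrices: $A\in\mathbb{R}^{n\times n}$, $B_1\in\mathbb{R}^{n\times m_1}$, $B_2\in\mathbb{R}^{n\times m_2}$, $C\in\mathbb{R}^{p\times n}$, $D\in\mathbb{R}^{p\times m_1}$, $C_0\in\mathbb{R}^{p_0\times n}$, $D_0\in\mathbb{R}^{p_0\times m_2}$. $J_0,J_1,J_2$ are the canonical real antisymmetric matrices of orders $n,m_1,m_2$ (block diagonal with copies of $\begin{bmatrix}0&1\\-1&0\end{bmatrix}$). $J:=\begin{bmatrix}J_2&0\\0&DJ_1D^{T}\end{bmatrix}$, $\mathbf{I}:=\begin{bmatrix}I_{m_2}\\0\end{bmatrix}\in\mathbb{R}^{(m_2+p)\times m_2}$, $\mathbb{S}_n$ is the space of real symmetric $n\times n$ matrices. $b\in\mathbb{R}^{n\times(m_2+p)}$, $B:=[\,B_1\ \ B_2\,]$, $\mathbf{C}:=\begin{bmatrix}0\\ C\end{bmatrix}$, $\mathbf{D}:=\begin{bmatrix}0 & I_{m_2}\\ D & 0\end{bmatrix}$. Closed-loop matrices: $\mathcal{A}:=\begin{bmatrix}A & B_2c\\ b\mathbf{C} & a\end{bmatrix}$, $\mathcal{B}:=\begin{bmatrix}B\\ b\mathbf{D}\end{bmatrix}$, $\mathcal{C}:=\begin{bmatrix}C_0 & D_0c\end{bmatrix}$. When $\mathcal{A}$ is Hurwitz, $P,Q$ are the unique solutions of $\mathcal{A}P+P\mathcal{A}^{T}+\mathcal{B}\mathcal{B}^{T}=0$,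 $\mathcal{A}^{T}Q+Q\mathcal{A}+\mathcal{C}^{T}\mathcal{C}=0$, and $E:=\mathrm{Tr}(\mathcal{C}P\mathcal{C}^{T})$. *)

theory Defs
  imports "HOL-Analysis.Analysis"
begin

definition blk :: "real^'c^'a \<Rightarrow> real^'d^'a \<Rightarrow> real^'c^'b \<Rightarrow> real^'d^'b
                   \<Rightarrow> real^('c + 'd)^('a + 'b)" where
  "blk X11 X12 X21 X22 = (\<chi> i j. (case i of
       Inl i1 \<Rightarrow> (case j of Inl j1 \<Rightarrow> X11 $ i1 $ j1 | Inr j2 \<Rightarrow> X12 $ i1 $ j2)
     | Inr i2 \<Rightarrow> (case j of Inl j1 \<Rightarrow> X21 $ i2 $ j1 | Inr j2 \<Rightarrow> X22 $ i2 $ j2)))"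

definition vstack :: "real^'c^'a \<Rightarrow> real^'c^'b \<Rightarrow> real^'c^('a + 'b)" where
  "vstack X Y = (\<chi> i. (case i of Inl i1 \<Rightarrow> X $ i1 | Inr i2 \<Rightarrow> Y $ i2))"

definition hstack :: "real^'b^'a \<Rightarrow> real^'c^'a \<Rightarrow> real^('b + 'c)^'a" where
  "hstack X Y = (\<chi> i j. (case j of Inl j1 \<Rightarrow> X $ i $ j1 | Inr j2 \<Rightarrow> Y $ i $ j2))"

text \<open>Indices of a finite linearly ordered type are numbered 0,1,2,... by their rank;
  the canonical matrix is block diagonal with copies of [[0,1],[-1,0]].\<close>

definition idx_rank :: "'k::{finite,linorder} \<Rightarrow> nat" where
  "idx_rank i = card {j. j < i}"

definition canonJ :: "real^('k::{finite,linorder})^('k::{finite,linorder})" where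
  "canonJ = (\<chi> i j.
     if even (idx_rank i) \<and> idx_rank j = idx_rank i + 1 then 1
     else if odd (idx_rank i) \<and> idx_rank i = idx_rank j + 1 then -1 else 0)"

definition hurwitz :: "real^'k^'k \<Rightarrow> bool" where
  "hurwitz F \<longleftrightarrow> (\<forall>z::complex. det (mat z - map_matrix complex_of_real F) = 0 \<longrightarrow> Re z < 0)"

definition lyap :: "real^'k^'k \<Rightarrow> real^'k^'k \<Rightarrow> real^'k^'k" where
  "lyap F M = (THE N. F ** N + N ** transpose F + M = 0)"

definition symm_mats :: "(real^'k^'k) set" where
  "symm_mats = {M. transpose M = M}"

definition symp :: "real^'k^'k \<Rightarrow> real^'k^'k" where
  "symp X = (1/2) *\<^sub>R (X + transpose X)"

definition bigJ :: "real^('m1::{finite,linorder})^('p::finite) \<Rightarrow> real^(('m2::{finite,linorder}) + ('p::finite))^(('m2::{finite,linorder}) + ('p::finite))" where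
  "bigJ D = blk (canonJ :: real^('m2::{finite,linorder})^('m2::{finite,linorder})) 0 0 (D ** (canonJ :: real^('m1::{finite,linorder})^('m1::{finite,linorder})) ** transpose D)"

definition bI :: "real^('m2::{finite,linorder})^(('m2::{finite,linorder}) + ('p::finite))" where
  "bI = vstack (mat 1) 0"

definition bC :: "real^('n::{finite,linorder})^('p::finite) \<Rightarrow> real^('n::{finite,linorder})^(('m2::{finite,linorder}) + ('p::finite))" where
  "bC C = vstack 0 C"

definition bD :: "real^('m1::{finite,linorder})^('p::finite) \<Rightarrow> real^(('m1::{finite,linorder}) + ('m2::{finite,linorder}))^(('m2::{finite,linorder}) + ('p::finite))" where
  "bD D = blk 0 (mat 1) D 0"

definition ctrl_a :: "real^('m1::{finite,linorder})^('p::finite) \<Rightarrow> real^(('m2::{finite,linorder}) + ('p::finite))^('n::{finite,linorder})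
     \<Rightarrow> real^('n::{finite,linorder})^('n::{finite,linorder}) \<Rightarrow> real^('n::{finite,linorder})^('n::{finite,linorder})" where
  "ctrl_a D b R = canonJ ** R + (1/2) *\<^sub>R (b ** bigJ D ** transpose b ** canonJ)"

definition ctrl_c :: "real^(('m2::{finite,linorder}) + ('p::finite))^('n::{finite,linorder}) \<Rightarrow> real^('n::{finite,linorder})^('m2::{finite,linorder})" where
  "ctrl_c b = canonJ ** transpose (bI :: real^('m2::{finite,linorder})^(('m2::{finite,linorder}) + ('p::finite))) ** transpose b ** canonJ"

definition clA :: "real^('n::{finite,linorder})^('n::{finite,linorder}) \<Rightarrow> real^('m2::{finite,linorder})^('n::{finite,linorder}) \<Rightarrow> real^('n::{finite,linorder})^('p::finite) \<Rightarrow> real^('m1::{finite,linorder})^('p::finite)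
     \<Rightarrow> real^(('m2::{finite,linorder}) + ('p::finite))^('n::{finite,linorder}) \<Rightarrow> real^('n::{finite,linorder})^('n::{finite,linorder})
     \<Rightarrow> real^(('n::{finite,linorder}) + ('n::{finite,linorder}))^(('n::{finite,linorder}) + ('n::{finite,linorder}))" where
  "clA A B2 C D b R = blk A (B2 ** ctrl_c b) (b ** bC C) (ctrl_a D b R)"

definition clB :: "real^('m1::{finite,linorder})^('n::{finite,linorder}) \<Rightarrow> real^('m2::{finite,linorder})^('n::{finite,linorder}) \<Rightarrow> real^('m1::{finite,linorder})^('p::finite)
     \<Rightarrow> real^(('m2::{finite,linorder}) + ('p::finite))^('n::{finite,linorder}) \<Rightarrow> real^(('m1::{finite,linorder}) + ('m2::{finite,linorder}))^(('n::{finite,linorder}) + ('n::{finite,linorder}))" where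
  "clB B1 B2 D b = vstack (hstack B1 B2) (b ** bD D)"

definition clC :: "real^('n::{finite,linorder})^('p0::finite) \<Rightarrow> real^('m2::{finite,linorder})^('p0::finite) \<Rightarrow> real^(('m2::{finite,linorder}) + ('p::finite))^('n::{finite,linorder})
     \<Rightarrow> real^(('n::{finite,linorder}) + ('n::{finite,linorder}))^('p0::finite)" where
  "clC C0 D0 b = hstack C0 (D0 ** ctrl_c b)"

definition gramP where
  "gramP A B1 B2 C D b R = lyap (clA A B2 C D b R) (clB B1 B2 D b ** transpose (clB B1 B2 D b))"

definition gramQ where
  "gramQ A B2 C D C0 D0 b R = lyap (transpose (clA A B2 C D b R)) (transpose (clC C0 D0 b) ** clC C0 D0 b)"

definition costE where
  "costE A B1 B2 C D C0 D0 b R =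
     trace (clC C0 D0 b ** gramP A B1 B2 C D b R ** transpose (clC C0 D0 b))"

definition calJ :: "real^('n::{finite,linorder})^('n::{finite,linorder}) \<Rightarrow> real^(('n::{finite,linorder}) + ('n::{finite,linorder}))^(('n::{finite,linorder}) + ('n::{finite,linorder}))" where
  "calJ M = vstack (0 :: real^('n::{finite,linorder})^('n::{finite,linorder})) canonJ ** M ** hstack (0 :: real^('n::{finite,linorder})^('n::{finite,linorder})) (mat 1)"

text \<open>Adjoint of calJ : S_n \<rightarrow> R^{2n x 2n} w.r.t. the Frobenius inner products
  (the Frobenius inner product is the inner product of real^'a^'b).\<close>
definition calJ_adj :: "real^(('n::{finite,linorder}) + ('n::{finite,linorder}))^(('n::{finite,linorder}) + ('n::{finite,linorder})) \<Rightarrow> real^('n::{finite,linorder})^('n::{finite,linorder})" where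
  "calJ_adj X = (THE Y. Y \<in> symm_mats \<and> (\<forall>M\<in>symm_mats. inner (calJ M) X = inner M Y))"

definition hessE where
  "hessE A B1 B2 C D C0 D0 b R M =
     (let Acl = clA A B2 C D b R; P = gramP A B1 B2 C D b R; Q = gramQ A B2 C D C0 D0 b R;
          X = calJ M
      in 4 *\<^sub>R calJ_adj (Q ** lyap Acl (symp (X ** P)) + lyap (transpose Acl) (symp (Q ** X)) ** P))"

end

theory Submission
  imports Defs "HOL-Computational_Algebra.Fundamental_Theorem_Algebra"
begin

text \<open>
  The closed-loop matrix depends affinely on R with linear part \<J>, so the Gramians P and Q are
  solutions of Lyapunov equations whose data move along an affine line. Since the closed loop is
  Hurwitz, its Lyapunov operator N \<mapsto> F N + N F^T is invertible, because F and -F^T have no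
  common eigenvalue (Sylvester's argument with an annihilating polynomial). Differentiating the
  Lyapunov equations implicitly shows that dP and dQ are again Lyapunov solutions; the adjointness
  of the Lyapunov operators of F and F^T turns dE into 2 \<langle>Q, \<J>(M) P\<rangle>, the product rule
  then yields the Hessian, and the same adjointness, used twice, makes it self-adjoint.
\<close>

lemma matrix_add_rdistrib: "(A + B) ** C = A ** C + B ** (C :: 'a::comm_semiring_1^_^_)"
  by (vector matrix_matrix_mult_def sum.distrib[symmetric] field_simps)

lemma matrix_diff_rdistrib: "(A - B) ** C = A ** C - B ** (C :: 'a::comm_ring_1^_^_)"
  by (simp add: matrix_matrix_mult_def vec_eq_iff sum_subtractf[symmetric] left_diff_distrib)

lemma matrix_diff_ldistrib: "A ** (B - C) = A ** B - A ** (C :: 'a::comm_ring_1^_^_)"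
  by (simp add: matrix_matrix_mult_def vec_eq_iff sum_subtractf[symmetric] right_diff_distrib)

lemma matrix_mul_uminus_left: "(- A) ** B = - (A ** B :: 'a::comm_ring_1^_^_)"
  by (simp add: matrix_matrix_mult_def vec_eq_iff sum_negf)

lemma mat_add: "mat (a + b) = mat a + (mat b :: 'a::monoid_add^'n^'n)"
  by (simp add: mat_def vec_eq_iff)

lemma mat_uminus: "mat (- a) = - (mat a :: 'a::group_add^'n^'n)"
  by (simp add: mat_def vec_eq_iff)

lemma mat_mult_left: "mat a ** X = (\<chi> i j. a * X$i$j :: 'a::semiring_1^_^_)"
  by (simp add: matrix_matrix_mult_def mat_def vec_eq_iff if_distrib[of "\<lambda>x. x * _"]
      cong: if_cong)

lemma mat_mult_right: "X ** mat a = (\<chi> i j. X$i$j * a :: 'a::semiring_1^_^_)"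
  by (simp add: matrix_matrix_mult_def mat_def vec_eq_iff if_distrib[of "\<lambda>x. _ * x"]
      cong: if_cong)

lemma mat_mult_commute: "mat a ** X = X ** (mat a :: 'a::comm_semiring_1^'n^'n)"
  by (simp add: mat_mult_left mat_mult_right mult.commute)

lemma mat_mult_mat: "mat a ** mat b = (mat (a * b) :: 'a::semiring_1^'n^'n)"
  by (simp add: mat_mult_left) (simp add: mat_def vec_eq_iff)

lemma mat_of_real_mult: "mat (of_real r) ** X = r *\<^sub>R (X :: 'a::real_algebra_1^_^_)"
  by (simp add: mat_mult_left vec_eq_iff of_real_def)

lemma transpose_add [simp]: "transpose (A + B) = transpose A + transpose B"
  by (simp add: transpose_def vec_eq_iff)

lemma transpose_diff [simp]: "transpose (A - B) = transpose A - transpose B"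
  by (simp add: transpose_def vec_eq_iff)

lemma transpose_uminus [simp]: "transpose (- A) = - transpose A"
  by (simp add: transpose_def vec_eq_iff)

lemma transpose_zero [simp]: "transpose 0 = 0"
  by (simp add: transpose_def vec_eq_iff)

lemma map_matrix_of_real_mult:
  "map_matrix complex_of_real (A ** B) = map_matrix of_real A ** map_matrix of_real B"
  by (simp add: matrix_matrix_mult_def vec_eq_iff)

lemma inner_matrix_trace: "inner X Y = trace (transpose X ** (Y :: real^'n^'m))"
  by (simp add: inner_vec_def trace_def transpose_def matrix_matrix_mult_def) (rule sum.swap)

lemma inner_matrix_mult_left: "inner (A ** X) Y = inner X (transpose A ** (Y :: real^'n^'m))"
  by (simp add: inner_matrix_trace matrix_transpose_mul matrix_mul_assoc)

lemma inner_matrix_mult_right: "inner (X ** A) Y = inner X (Y ** transpose (A :: real^'n^'k))"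
proof -
  have "inner (X ** A) Y = trace (transpose A ** (transpose X ** Y))"
    by (simp add: inner_matrix_trace matrix_transpose_mul matrix_mul_assoc)
  also have "\<dots> = trace ((transpose X ** Y) ** transpose A)"
    by (rule trace_mul_sym)
  finally show ?thesis
    by (simp add: inner_matrix_trace matrix_mul_assoc)
qed

lemma inner_matrix_sandwich:
  "inner (E1 ** M ** E2) X = inner M (transpose E1 ** X ** transpose (E2 :: real^'n^'k))"
proof -
  have "inner (E1 ** M ** E2) X = inner (E1 ** M) (X ** transpose E2)"
    by (rule inner_matrix_mult_right)
  also have "\<dots> = inner M (transpose E1 ** (X ** transpose E2))"
    by (rule inner_matrix_mult_left)
  finally show ?thesis
    by (simp add: matrix_mul_assoc)
qed

lemma inner_transpose_transpose: "inner (transpose X) (transpose Y) = inner X (Y :: real^'n^'m)"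
  by (simp add: inner_vec_def transpose_def) (rule sum.swap)

lemma trace_sandwich_eq_inner:
  "trace (C ** P ** transpose C) = inner (transpose C ** C) (P :: real^'n^'n)"
proof -
  have "trace (C ** P ** transpose C) = trace (transpose C ** (C ** P))"
    by (rule trace_mul_sym)
  then show ?thesis
    by (simp add: inner_matrix_trace matrix_transpose_mul matrix_mul_assoc)
qed

lemma bounded_linear_matrix_mult_left: "bounded_linear (\<lambda>Y::real^'n^'k. A ** Y)"
  unfolding linear_conv_bounded_linear[symmetric]
  by (rule linearI) (simp_all add: matrix_add_ldistrib matrix_scalar_ac scalar_matrix_assoc)

lemma symp_transpose [simp]: "transpose (symp X) = symp X"
  by (simp add: symp_def transpose_scalar add.commute)

lemma symp_of_transpose: "symp (transpose X) = symp X"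
  by (simp add: symp_def add.commute)

lemma inner_symp_right:
  assumes "transpose M = M"
  shows "inner M (symp Y) = inner M Y"
proof -
  have "inner M (transpose Y) = inner M Y"
    using inner_transpose_transpose[of M Y] assms by simp
  then show ?thesis
    by (simp add: symp_def inner_add_right)
qed

section \<open>Matrix polynomials and intertwined matrices\<close>

lemma det_eq_0_if_mult_eq_0:
  fixes M :: "'a::field^'n^'n"
  assumes "M ** Y = 0" "Y \<noteq> 0"
  shows "det M = 0"
proof (rule ccontr)
  assume "det M \<noteq> 0"
  then obtain B where "B ** M = mat 1"
    using invertible_det_nz invertible_left_inverse by blast
  then have "Y = B ** (M ** Y)"
    by (simp add: matrix_mul_assoc)
  with assms show False
    by simp
qed

lemma det_eq_0_if_eigen:
  fixes F :: "'a::field^'n^'n"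
  assumes "F ** Y = mat z ** Y" "Y \<noteq> 0"
  shows "det (mat z - F) = 0"
  using assms by (intro det_eq_0_if_mult_eq_0[of _ Y]) (simp_all add: matrix_diff_rdistrib)

definition mat_poly :: "'a::comm_ring_1 poly \<Rightarrow> 'a^'k^'k \<Rightarrow> 'a^'k^'k" where
  "mat_poly p M = fold_coeffs (\<lambda>a N. mat a + M ** N) p 0"

lemma mat_poly_0 [simp]: "mat_poly 0 M = 0"
  by (simp add: mat_poly_def)

lemma mat_poly_pCons [simp]: "mat_poly (pCons a p) M = mat a + M ** mat_poly p M"
  by (cases "p = 0 \<and> a = 0") (auto simp: mat_poly_def)

lemma mat_poly_add: "mat_poly (p + q) M = mat_poly p M + mat_poly q M"
  by (induction p q rule: poly_induct2) (simp_all add: mat_add matrix_add_ldistrib algebra_simps)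

lemma mat_poly_diff: "mat_poly (p - q) M = mat_poly p M - mat_poly q M"
  using mat_poly_add[of "p - q" q M] by simp

lemma mat_poly_sum: "mat_poly (sum f I) M = (\<Sum>i\<in>I. mat_poly (f i) M)"
  by (induction I rule: infinite_finite_induct) (simp_all add: mat_poly_add)

lemma mat_poly_smult: "mat_poly (smult c p) M = mat c ** mat_poly p M"
proof (induction p)
  case (pCons a p)
  have "M ** mat c = mat c ** M"
    by (rule mat_mult_commute[symmetric])
  with pCons show ?case
    by (simp add: mat_add matrix_add_ldistrib mat_mult_mat matrix_mul_assoc)
qed simp

lemma mat_poly_mult: "mat_poly (p * q) M = mat_poly p M ** mat_poly q M"
  by (induction p) (simp_all add: mat_poly_add mat_poly_smult matrix_add_rdistrib matrix_mul_assoc)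

lemma mat_poly_intertwine:
  assumes "F ** X = X ** G"
  shows "mat_poly p F ** X = X ** mat_poly p G"
proof (induction p)
  case (pCons a p)
  have "F ** mat_poly p F ** X = X ** G ** mat_poly p G"
    by (metis pCons.IH assms matrix_mul_assoc)
  then show ?case
    by (simp add: matrix_add_rdistrib matrix_add_ldistrib mat_mult_commute[of a X]
        matrix_mul_assoc)
qed simp

text \<open>The powers of M cannot all be independent in the finite-dimensional space of matrices.\<close>
lemma mat_poly_annihilator:
  fixes M :: "'a::{comm_ring_1, real_algebra_1, euclidean_space}^'k^'k"
  obtains p where "p \<noteq> 0" "mat_poly p M = 0"
proof (cases "inj (\<lambda>i. mat_poly (monom 1 i) M)")
  case False
  then obtain i j where "i \<noteq> j" "mat_poly (monom 1 i) M = mat_poly (monom 1 j) M"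
    unfolding inj_def by blast
  moreover from \<open>i \<noteq> j\<close> have "coeff (monom 1 i - monom 1 j) i \<noteq> (0::'a)"
    by simp
  then have "monom 1 i - monom 1 j \<noteq> (0::'a poly)"
    by (metis coeff_0)
  ultimately show ?thesis
    by (intro that[of "monom 1 i - monom 1 j"]) (auto simp: mat_poly_diff)
next
  case True
  define v where "v i = mat_poly (monom 1 i) M" for i
  have "\<not> finite (range v)"
    using True finite_imageD unfolding v_def by blast
  then have "dependent (range v)"
    using independent_bound by blast
  then obtain t u where t: "finite t" "t \<subseteq> range v" "(\<Sum>x\<in>t. u x *\<^sub>R x) = 0"
    and "\<exists>x\<in>t. u x \<noteq> 0"
    unfolding dependent_explicit by blast
  then obtain i0 where i0: "v i0 \<in> t" "u (v i0) \<noteq> 0"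
    using t(2) by blast
  define I where "I = v -` t"
  have inj_v: "inj v"
    using True unfolding v_def .
  have "finite I"
    using t(1) inj_v by (simp add: I_def finite_vimageI)
  have t_eq: "t = v ` I"
    using t(2) unfolding I_def by blast
  define p where "p = (\<Sum>i\<in>I. monom (of_real (u (v i)) :: 'a) i)"
  have "mat_poly (monom (of_real r) i) M = r *\<^sub>R v i" for r i
    by (metis mat_of_real_mult mat_poly_smult smult_monom mult.right_neutral v_def)
  then have "mat_poly p M = (\<Sum>i\<in>I. u (v i) *\<^sub>R v i)"
    by (simp add: p_def mat_poly_sum)
  also have "\<dots> = 0"
    using t(3) inj_v by (simp add: t_eq sum.reindex inj_on_subset)
  finally have "mat_poly p M = 0" .
  moreover have "coeff p i0 = of_real (u (v i0))"
    using \<open>finite I\<close> i0(1) by (simp add: p_def coeff_sum I_def)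
  then have "p \<noteq> 0"
    using i0(2) by auto
  ultimately show ?thesis
    using that by blast
qed

text \<open>Sylvester's argument: a polynomial p of least degree with p(F) X = 0 has a root z, and
  cancelling the factor x - z leaves a nonzero Y = r(F) X, an eigenvector of F on the left and,
  by intertwining, of G on the right.\<close>
lemma intertwine_common_eigenvalue:
  fixes F :: "complex^'k^'k" and G :: "complex^'m^'m" and X :: "complex^'m^'k"
  assumes FG: "F ** X = X ** G" and "X \<noteq> 0"
  obtains z Y where "Y \<noteq> 0" "F ** Y = mat z ** Y" "Y ** G = Y ** mat z"
proof -
  obtain q where "q \<noteq> 0" "mat_poly q F = 0"
    by (rule mat_poly_annihilator)
  then have "q \<noteq> 0 \<and> mat_poly q F ** X = 0"
    by simp
  then obtain p where p: "p \<noteq> 0" "mat_poly p F ** X = 0"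
    and least: "\<And>r. r \<noteq> 0 \<Longrightarrow> mat_poly r F ** X = 0 \<Longrightarrow> degree p \<le> degree r"
    using ex_has_least_nat[of "\<lambda>p. p \<noteq> 0 \<and> mat_poly p F ** X = 0" q degree] by blast
  have "degree p \<noteq> 0"
  proof
    assume "degree p = 0"
    then obtain c where "p = [:c:]"
      by (rule degree_eq_zeroE)
    with p have "c \<noteq> 0" "mat c ** X = 0"
      by simp_all
    then have "X = mat (inverse c) ** mat c ** X"
      by (simp add: mat_mult_mat)
    also have "\<dots> = 0"
      using \<open>mat c ** X = 0\<close> by (simp flip: matrix_mul_assoc)
    finally show False
      using \<open>X \<noteq> 0\<close> by simp
  qed
  then obtain z where "poly p z = 0"
    using fundamental_theorem_of_algebra[of p] constant_degree[of p] by auto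
  then obtain r where pr: "p = [:- z, 1:] * r"
    by (metis dvdE poly_eq_0_iff_dvd)
  with p(1) have "r \<noteq> 0" "degree r < degree p"
    by (auto simp: degree_mult_eq simp del: mult_pCons_left)
  define Y where "Y = mat_poly r F ** X"
  have "Y \<noteq> 0"
    using least[OF \<open>r \<noteq> 0\<close>] \<open>degree r < degree p\<close> unfolding Y_def by fastforce
  have "(F - mat z) ** Y = 0"
    using p(2) by (simp add: Y_def pr mat_poly_mult mat_uminus matrix_mul_assoc
        del: mult_pCons_left)
  then have F_Y: "F ** Y = mat z ** Y"
    by (simp add: matrix_diff_rdistrib)
  have "Y ** G = mat_poly r F ** F ** X"
    by (metis FG Y_def matrix_mul_assoc)
  also have "\<dots> = F ** Y"
    by (simp add: Y_def mat_poly_intertwine[of F F F r] matrix_mul_assoc)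
  finally have "Y ** G = Y ** mat z"
    by (simp add: F_Y mat_mult_commute)
  with \<open>Y \<noteq> 0\<close> F_Y show ?thesis
    using that by blast
qed

section \<open>The Lyapunov operator\<close>

definition lyap_op :: "real^'k^'k \<Rightarrow> real^'k^'k \<Rightarrow> real^'k^'k" where
  "lyap_op F N = F ** N + N ** transpose F"

lemma linear_lyap_op: "linear (lyap_op F)"
  by (rule linearI) (simp_all add: lyap_op_def matrix_add_ldistrib matrix_add_rdistrib
      matrix_scalar_ac scalar_matrix_assoc[symmetric] scaleR_add_right)

lemma lyap_op_add_left: "lyap_op (F + G) N = lyap_op F N + lyap_op G N"
  by (simp add: lyap_op_def matrix_add_ldistrib matrix_add_rdistrib)

lemma bounded_bilinear_lyap_op:
  fixes K :: "'x::euclidean_space \<Rightarrow> real^'k^'k"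
  assumes "linear K"
  shows "bounded_bilinear (\<lambda>x. lyap_op (K x))"
proof -
  have "bilinear (\<lambda>x. lyap_op (K x))"
    unfolding bilinear_def
  proof (intro conjI allI)
    show "linear (\<lambda>x. lyap_op (K x) N)" for N
      using assms
      by (intro linearI) (simp_all add: lyap_op_def linear_add linear_scale matrix_add_rdistrib
          matrix_add_ldistrib transpose_scalar matrix_scalar_ac scalar_matrix_assoc[symmetric])
  qed (rule linear_lyap_op)
  then show ?thesis
    by (simp add: bilinear_conv_bounded_bilinear)
qed

lemma lyap_op_symmetric:
  assumes "transpose P = P"
  shows "lyap_op X P = 2 *\<^sub>R symp (X ** P)"
  using assms by (simp add: lyap_op_def symp_def matrix_transpose_mul)

lemma lyap_op_transpose_symmetric:
  assumes "transpose Q = Q"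
  shows "lyap_op (transpose X) Q = 2 *\<^sub>R symp (Q ** X)"
  using assms by (simp add: lyap_op_symmetric symp_of_transpose[of "Q ** X", symmetric]
      matrix_transpose_mul)

lemma hurwitz_transpose:
  assumes "hurwitz F"
  shows "hurwitz (transpose F)"
proof -
  have "mat z - map_matrix complex_of_real (transpose F)
      = transpose (mat z - map_matrix complex_of_real F)" for z
    by (simp add: transpose_def vec_eq_iff mat_def)
  then have "det (mat z - map_matrix complex_of_real (transpose F))
      = det (mat z - map_matrix complex_of_real F)" for z
    by (metis det_transpose)
  with assms show ?thesis
    by (simp add: hurwitz_def)
qed

text \<open>A nonzero solution of F Y + Y F^T = 0 would make F and -F^T share an eigenvalue z, so that
  both z and -z would be eigenvalues of F.\<close>
lemma hurwitz_imp_inj_lyap_op: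
  assumes "hurwitz F"
  shows "inj (lyap_op F)"
proof -
  have "Y = 0" if Y: "lyap_op F Y = 0" for Y
  proof (rule ccontr)
    assume "Y \<noteq> 0"
    define Fc where "Fc = map_matrix complex_of_real F"
    define Yc where "Yc = map_matrix complex_of_real Y"
    have "F ** Y = - (Y ** transpose F)"
      using Y by (simp add: lyap_op_def eq_neg_iff_add_eq_0)
    then have "map_matrix complex_of_real (F ** Y)
        = map_matrix complex_of_real (- (Y ** transpose F))"
      by simp
    then have "Fc ** Yc = Yc ** (- transpose Fc)"
      by (simp add: Fc_def Yc_def map_matrix_of_real_mult[symmetric])
        (simp add: vec_eq_iff transpose_def matrix_matrix_mult_def sum_negf)
    moreover have "Yc \<noteq> 0"
      using \<open>Y \<noteq> 0\<close> by (simp add: Yc_def vec_eq_iff)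
    ultimately obtain z Z where "Z \<noteq> 0" "Fc ** Z = mat z ** Z"
      and "Z ** (- transpose Fc) = Z ** mat z"
      by (rule intertwine_common_eigenvalue)
    have "transpose (Z ** (- transpose Fc)) = transpose (Z ** mat z)"
      using \<open>Z ** (- transpose Fc) = Z ** mat z\<close> by simp
    then have "- (Fc ** transpose Z) = mat z ** transpose Z"
      by (simp add: matrix_transpose_mul matrix_mul_uminus_left)
    then have "Fc ** transpose Z = mat (- z) ** transpose Z"
      by (metis minus_minus mat_uminus matrix_mul_uminus_left)
    moreover have "transpose Z \<noteq> 0"
      using \<open>Z \<noteq> 0\<close> by (metis transpose_transpose transpose_zero)
    ultimately have "det (mat z - Fc) = 0" "det (mat (- z) - Fc) = 0"
      using \<open>Z \<noteq> 0\<close> \<open>Fc ** Z = mat z ** Z\<close> by (simp_all add: det_eq_0_if_eigen)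
    with assms have "Re z < 0" "Re (- z) < 0"
      unfolding hurwitz_def Fc_def by blast+
    then show False
      by simp
  qed
  then show ?thesis
    using linear_lyap_op linear_inj_iff_eq_0 by blast
qed

lemma lyap_eq_iff:
  assumes "inj (lyap_op F)"
  shows "lyap F M = N \<longleftrightarrow> lyap_op F N + M = 0"
proof -
  have uniq: "\<exists>!N. lyap_op F N + M = 0"
  proof -
    obtain N where N: "lyap_op F N = - M"
      using linear_injective_imp_surjective[OF linear_lyap_op assms] by (metis surjD)
    show ?thesis
    proof (rule ex1I[of _ N])
      show "lyap_op F N + M = 0"
        by (simp add: N)
      show "N' = N" if "lyap_op F N' + M = 0" for N'
        using that N injD[OF assms] by (metis add_eq_0_iff2)
    qed
  qed
  have lyap_alt: "lyap F M = (THE N. lyap_op F N + M = 0)"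
    by (simp add: lyap_def lyap_op_def)
  show ?thesis
    using theI'[OF uniq] the1_equality[OF uniq] unfolding lyap_alt by blast
qed

lemma lyap_op_lyap: "inj (lyap_op F) \<Longrightarrow> lyap_op F (lyap F M) + M = 0"
  using lyap_eq_iff by blast

lemma lyap_scaleR:
  assumes inj: "inj (lyap_op F)"
  shows "lyap F (c *\<^sub>R M) = c *\<^sub>R lyap F M"
proof -
  have "lyap_op F (c *\<^sub>R lyap F M) + c *\<^sub>R M = c *\<^sub>R (lyap_op F (lyap F M) + M)"
    by (simp add: linear_scale[OF linear_lyap_op] scaleR_add_right)
  then show ?thesis
    using inj lyap_op_lyap[OF inj, of M] by (simp add: lyap_eq_iff)
qed

lemma lyap_symmetric:
  assumes "inj (lyap_op F)" "transpose M = M"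
  shows "transpose (lyap F M) = lyap F M"
proof -
  have "transpose (lyap_op F (lyap F M) + M) = 0"
    using lyap_op_lyap[OF assms(1)] by simp
  then have "lyap_op F (transpose (lyap F M)) + M = 0"
    using assms(2) by (simp add: lyap_op_def matrix_transpose_mul add.commute)
  then show ?thesis
    using assms(1) by (simp flip: lyap_eq_iff)
qed

lemma inner_lyap_transpose:
  assumes "inj (lyap_op F)" "inj (lyap_op (transpose F))"
  shows "inner U (lyap F V) = inner (lyap (transpose F) U) V"
proof -
  define N where "N = lyap F V"
  define K where "K = lyap (transpose F) U"
  have V: "V = - (F ** N + N ** transpose F)"
    using lyap_op_lyap[OF assms(1), of V] by (simp add: N_def lyap_op_def add_eq_0_iff)
  have U: "U = - (transpose F ** K + K ** F)"
    using lyap_op_lyap[OF assms(2), of U] by (simp add: K_def lyap_op_def add_eq_0_iff)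
  have "inner U N = - (inner K (F ** N) + inner K (N ** transpose F))"
    by (simp add: U inner_add_left inner_diff_left inner_matrix_mult_left[of "transpose F" K]
        inner_matrix_mult_right[of K F])
  also have "\<dots> = inner K V"
    by (simp add: V inner_add_right inner_diff_right)
  finally show ?thesis
    by (simp add: N_def K_def)
qed

section \<open>Differentiating solutions of perturbed linear equations\<close>

lemma bounded_bilinear_left_inverse_bound:
  fixes L :: "'y::euclidean_space \<Rightarrow> 'y" and B :: "'x::real_normed_vector \<Rightarrow> 'y \<Rightarrow> 'y"
  assumes "linear L" "inj L" "bounded_bilinear B"
  obtains Li K where "linear Li" "\<And>y. Li (L y) = y" "K > 0"
    "\<And>x y. norm (Li (B x y)) \<le> K * norm x * norm y"
proof -
  obtain Li where Li: "linear Li" "Li \<circ> L = id"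
    using linear_injective_left_inverse[OF assms(1,2)] by blast
  obtain b where b: "b > 0" "\<And>y. norm (Li y) \<le> b * norm y"
    using linear_bounded_pos[OF Li(1)] by blast
  obtain c where c: "c > 0" "\<And>x y. norm (B x y) \<le> norm x * norm y * c"
    using bounded_bilinear.pos_bounded[OF assms(3)] by blast
  have bound: "norm (Li (B x y)) \<le> (b * c) * norm x * norm y" for x y
  proof -
    have "norm (Li (B x y)) \<le> b * norm (B x y)"
      by (rule b(2))
    also have "\<dots> \<le> b * (norm x * norm y * c)"
      using b(1) c(2) by (intro mult_left_mono) simp_all
    finally show ?thesis
      by (simp add: algebra_simps)
  qed
  have "Li (L y) = y" for y
    using Li(2) by (metis comp_apply id_apply)
  with Li(1) bound b(1) c(1) show ?thesis
    by (intro that[of Li "b * c"]) simp_all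
qed

lemma eventually_inj_bilinear_perturbation:
  fixes L :: "'y::euclidean_space \<Rightarrow> 'y" and B :: "'x::real_normed_vector \<Rightarrow> 'y \<Rightarrow> 'y"
  assumes L: "linear L" "inj L" and B: "bounded_bilinear B"
  shows "\<forall>\<^sub>F x in nhds 0. inj (\<lambda>y. L y + B x y)"
proof -
  obtain Li K where Li: "linear Li" "\<And>y. Li (L y) = y" and "K > 0"
    and bound: "\<And>x y. norm (Li (B x y)) \<le> K * norm x * norm y"
    by (rule bounded_bilinear_left_inverse_bound[OF L B]) (rule that; assumption)
  have "inj (\<lambda>y. L y + B x y)" if x: "norm x < 1 / (2 * K)" for x
  proof -
    have "bounded_linear (\<lambda>y. L y + B x y)"
      using L(1) by (intro bounded_linear_add bounded_bilinear.bounded_linear_right[OF B])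
        (simp add: linear_conv_bounded_linear)
    then have lin: "linear (\<lambda>y. L y + B x y)"
      by (rule bounded_linear.linear)
    have "y = 0" if "L y + B x y = 0" for y
    proof -
      have "y = Li (- B x y)"
        using that Li(2)[of y] by (metis add_eq_0_iff2)
      then have "norm y \<le> K * norm x * norm y"
        using bound[of x y] by (simp add: linear_neg[OF Li(1)]) (metis norm_minus_cancel)
      also have "\<dots> \<le> 1/2 * norm y"
        using x \<open>K > 0\<close> by (intro mult_right_mono) (simp_all add: field_simps)
      finally show "y = 0"
        by simp
    qed
    with lin show ?thesis
      using linear_inj_iff_eq_0 by blast
  qed
  moreover have "1 / (2 * K) > 0"
    using \<open>K > 0\<close> by simp
  ultimately show ?thesis
    unfolding eventually_nhds_metric dist_norm diff_zero by blast
qed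

lemma bilinear_perturbed_solution_remainder:
  fixes B :: "'x::real_normed_vector \<Rightarrow> 'y::real_normed_vector \<Rightarrow> 'y"
  assumes L: "linear L" and Li: "linear Li" "\<And>y. Li (L y) = y" and B: "bounded_bilinear B"
    and bound: "\<And>x y. norm (Li (B x y)) \<le> K * norm x * norm y" and "K \<ge> 0"
    and y0: "L y0 = c" and y: "L y + B x y = c" and x: "K * norm x \<le> 1/2"
  shows "norm (y - y0 + Li (B x y0)) \<le> 2 * K^2 * norm y0 * norm x ^ 2"
proof -
  define d where "d = y - y0"
  have "L d = - B x y"
    using y y0 by (simp add: d_def linear_diff[OF L] algebra_simps)
  then have d: "d = - Li (B x y)"
    using Li(2)[of d] by (simp add: linear_neg[OF Li(1)])
  have "norm d \<le> K * norm x * norm y"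
    using bound[of x y] by (simp add: d)
  also have "\<dots> \<le> K * norm x * (norm y0 + norm d)"
    using \<open>K \<ge> 0\<close> norm_triangle_ineq[of y0 d] by (intro mult_left_mono) (simp_all add: d_def)
  also have "\<dots> = K * norm x * norm y0 + K * norm x * norm d"
    by (simp add: distrib_left)
  also have "\<dots> \<le> K * norm x * norm y0 + 1/2 * norm d"
    using x by (intro add_left_mono mult_right_mono) simp_all
  finally have nd: "norm d \<le> 2 * K * norm x * norm y0"
    by simp
  have "y - y0 + Li (B x y0) = - Li (B x y) + Li (B x y0)"
    by (simp flip: d d_def)
  also have "\<dots> = - Li (B x d)"
    by (simp add: d_def bounded_bilinear.diff_right[OF B] linear_diff[OF Li(1)])
  finally have "norm (y - y0 + Li (B x y0)) \<le> K * norm x * norm d"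
    using bound[of x d] by simp
  also have "\<dots> \<le> K * norm x * (2 * K * norm x * norm y0)"
    using nd \<open>K \<ge> 0\<close> by (simp add: mult_left_mono)
  finally show ?thesis
    by (simp add: power2_eq_square algebra_simps)
qed

text \<open>The equation itself bounds f x - f 0 by O(norm x), so no continuity of f has to be assumed.\<close>
lemma has_derivative_bilinear_perturbed_solution:
  fixes L :: "'y::euclidean_space \<Rightarrow> 'y" and B :: "'x::euclidean_space \<Rightarrow> 'y \<Rightarrow> 'y"
  assumes L: "linear L" "inj L" and B: "bounded_bilinear B"
    and f: "\<forall>\<^sub>F x in nhds 0. L (f x) + B x (f x) = c"
    and D: "\<And>h. L (D h) + B h (f 0) = 0"
  shows "(f has_derivative D) (at 0)"
proof -
  obtain Li K where Li: "linear Li" "\<And>y. Li (L y) = y" and "K > 0"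
    and bound: "\<And>x y. norm (Li (B x y)) \<le> K * norm x * norm y"
    by (rule bounded_bilinear_left_inverse_bound[OF L B]) (rule that; assumption)
  have D_eq: "D h = - Li (B h (f 0))" for h
    using D[of h] Li(2)[of "D h"] by (metis add_eq_0_iff2 linear_neg[OF Li(1)])
  have "bounded_linear Li"
    using Li(1) by (simp add: linear_conv_bounded_linear)
  then have "bounded_linear (\<lambda>h. - Li (B h (f 0)))"
    by (intro bounded_linear_minus bounded_linear_compose[of Li, OF _
          bounded_bilinear.bounded_linear_left[OF B]])
  then have "bounded_linear D"
    by (simp add: D_eq[abs_def])
  have "L (f 0) = c"
    using eventually_nhds_x_imp_x[OF f] bounded_bilinear.zero_left[OF B] by simp
  define r where "r = 2 * K^2 * norm (f 0)"
  have "\<forall>\<^sub>F x in nhds 0. K * norm x \<le> 1/2"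
    unfolding eventually_nhds_metric using \<open>K > 0\<close>
    by (intro exI[of _ "1 / (2 * K)"]) (auto simp: dist_norm field_simps)
  with f have "\<forall>\<^sub>F x in at 0. norm (norm (f x - f 0 - D (x - 0)) / norm (x - 0)) \<le> r * norm x"
    unfolding eventually_at_filter
  proof eventually_elim
    case (elim x)
    then have "norm (f x - f 0 - D x) \<le> r * norm x ^ 2"
      using bilinear_perturbed_solution_remainder[OF L(1) Li B bound _ \<open>L (f 0) = c\<close>] \<open>K > 0\<close>
      by (simp add: D_eq r_def)
    then show ?case
      by (simp add: divide_le_eq power2_eq_square mult.assoc)
  qed
  moreover have "((\<lambda>x. r * norm x) \<longlongrightarrow> 0) (at (0::'x))"
    by (auto intro!: tendsto_eq_intros)
  ultimately show ?thesis
    unfolding has_derivative_iff_norm using \<open>bounded_linear D\<close>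
    by (auto intro: Lim_null_comparison)
qed

lemma has_derivative_lyap_affine:
  fixes G K :: "'x::euclidean_space \<Rightarrow> real^'k^'k"
  assumes K: "linear K" and G: "\<And>y. G y = G x + K (y - x)" and inj: "inj (lyap_op (G x))"
  shows "((\<lambda>y. lyap (G y) W) has_derivative
    (\<lambda>h. lyap (G x) (lyap_op (K h) (lyap (G x) W)))) (at x)"
proof -
  define f where "f h = lyap (G x + K h) W" for h
  have bb: "bounded_bilinear (\<lambda>h. lyap_op (K h))"
    by (rule bounded_bilinear_lyap_op[OF K])
  have "\<forall>\<^sub>F h in nhds 0. inj (\<lambda>N. lyap_op (G x) N + lyap_op (K h) N)"
    by (rule eventually_inj_bilinear_perturbation[OF linear_lyap_op inj bb])
  then have "\<forall>\<^sub>F h in nhds 0. lyap_op (G x) (f h) + lyap_op (K h) (f h) = - W"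
  proof eventually_elim
    case (elim h)
    then have "inj (lyap_op (G x + K h))"
      by (simp add: lyap_op_add_left[abs_def])
    from lyap_op_lyap[OF this, of W] show ?case
      by (simp add: f_def lyap_op_add_left eq_neg_iff_add_eq_0)
  qed
  moreover have "lyap_op (G x) (lyap (G x) (lyap_op (K h) (lyap (G x) W)))
      + lyap_op (K h) (f 0) = 0" for h
    using lyap_op_lyap[OF inj] by (simp add: f_def linear_0[OF K])
  ultimately have "(f has_derivative (\<lambda>h. lyap (G x) (lyap_op (K h) (lyap (G x) W)))) (at 0)"
    by (rule has_derivative_bilinear_perturbed_solution[OF linear_lyap_op inj bb])
  then have "(f has_derivative (\<lambda>h. lyap (G x) (lyap_op (K h) (lyap (G x) W)))) (at (x - x))"
    by simp
  moreover have "((\<lambda>y. y - x) has_derivative (\<lambda>h. h)) (at x)"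
    by (auto intro!: derivative_eq_intros)
  ultimately have "((\<lambda>y. f (y - x)) has_derivative
      (\<lambda>h. lyap (G x) (lyap_op (K h) (lyap (G x) W)))) (at x)"
    using has_derivative_compose by blast
  then show ?thesis
    by (simp add: f_def G[symmetric])
qed

section \<open>The Gramian cost and its Hessian\<close>

definition hess_op :: "real^'k^'k \<Rightarrow> real^'k^'k \<Rightarrow> real^'k^'k \<Rightarrow> real^'k^'k \<Rightarrow> real^'k^'k" where
  "hess_op F P Q X = Q ** lyap F (symp (X ** P)) + lyap (transpose F) (symp (Q ** X)) ** P"

lemma inner_hess_op_commute:
  assumes inj: "inj (lyap_op F)" "inj (lyap_op (transpose F))"
    and P: "transpose P = P" and Q: "transpose Q = Q"
  shows "inner X1 (hess_op F P Q X2) = inner X2 (hess_op F P Q X1)"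
proof -
  have cross: "inner X (Q ** lyap F (symp (Y ** P)))
      = inner Y (lyap (transpose F) (symp (Q ** X)) ** P)" for X Y
  proof -
    let ?N = "lyap F (symp (Y ** P))"
    have "inner X (Q ** ?N) = inner (Q ** X) ?N"
      by (simp add: inner_matrix_mult_left Q)
    also have "\<dots> = inner (symp (Q ** X)) ?N"
      using inner_symp_right[OF lyap_symmetric[OF inj(1) symp_transpose[of "Y ** P"]],
          of "Q ** X"]
      by (simp add: inner_commute)
    also have "\<dots> = inner (lyap (transpose F) (symp (Q ** X))) (symp (Y ** P))"
      by (rule inner_lyap_transpose[OF inj])
    also have "\<dots> = inner Y (lyap (transpose F) (symp (Q ** X)) ** P)"
      by (simp add: inner_symp_right lyap_symmetric[OF inj(2)] inner_matrix_mult_right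
          inner_commute[of _ "Y ** P"] P)
    finally show ?thesis .
  qed
  show ?thesis
    by (simp add: hess_op_def inner_add_right cross[of X1 X2] cross[of X2 X1])
qed

text \<open>P and Q are the controllability and observability Gramians of the closed loop Acl x, and
  cost x = Tr(\<C> P \<C>^T) when V = \<C>^T \<C>.\<close>
locale lyapunov_cost =
  fixes Acl K :: "'x::euclidean_space \<Rightarrow> real^'m^'m" and W V :: "real^'m^'m"
  assumes linear_K: "linear K"
    and Acl_affine: "\<And>x y. Acl y = Acl x + K (y - x)"
    and W_symmetric: "transpose W = W"
    and V_symmetric: "transpose V = V"
begin

definition P :: "'x \<Rightarrow> real^'m^'m" where
  "P x = lyap (Acl x) W"

definition Q :: "'x \<Rightarrow> real^'m^'m" where
  "Q x = lyap (transpose (Acl x)) V"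

definition cost :: "'x \<Rightarrow> real" where
  "cost x = inner V (P x)"

definition cost_grad :: "'x \<Rightarrow> 'x \<Rightarrow> real" where
  "cost_grad x h = 2 * inner (Q x) (K h ** P x)"

context
  fixes x assumes hurwitz: "hurwitz (Acl x)"
begin

lemma inj_lyap_op: "inj (lyap_op (Acl x))"
  using hurwitz by (rule hurwitz_imp_inj_lyap_op)

lemma inj_lyap_op_transpose: "inj (lyap_op (transpose (Acl x)))"
  using hurwitz by (intro hurwitz_imp_inj_lyap_op hurwitz_transpose)

lemma P_symmetric: "transpose (P x) = P x"
  unfolding P_def by (rule lyap_symmetric[OF inj_lyap_op W_symmetric])

lemma Q_symmetric: "transpose (Q x) = Q x"
  unfolding Q_def by (rule lyap_symmetric[OF inj_lyap_op_transpose V_symmetric])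

lemma P_has_derivative:
  "(P has_derivative (\<lambda>h. 2 *\<^sub>R lyap (Acl x) (symp (K h ** P x)))) (at x)"
proof -
  have "(P has_derivative (\<lambda>h. lyap (Acl x) (lyap_op (K h) (P x)))) (at x)"
    unfolding P_def[abs_def]
    by (rule has_derivative_lyap_affine[OF linear_K Acl_affine inj_lyap_op])
  then show ?thesis
    by (simp add: lyap_op_symmetric[OF P_symmetric] lyap_scaleR[OF inj_lyap_op])
qed

lemma Q_has_derivative:
  "(Q has_derivative (\<lambda>h. 2 *\<^sub>R lyap (transpose (Acl x)) (symp (Q x ** K h)))) (at x)"
proof -
  have lin: "linear (\<lambda>h. transpose (K h))"
    using linear_K by (intro linearI) (simp_all add: linear_add linear_scale transpose_scalar)
  have aff: "transpose (Acl y) = transpose (Acl x) + transpose (K (y - x))" for y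
    using Acl_affine[where x = x and y = y] by simp
  have "(Q has_derivative
      (\<lambda>h. lyap (transpose (Acl x)) (lyap_op (transpose (K h)) (Q x)))) (at x)"
    unfolding Q_def[abs_def]
    by (rule has_derivative_lyap_affine[where G = "\<lambda>y. transpose (Acl y)", OF lin aff
          inj_lyap_op_transpose])
  then show ?thesis
    by (simp add: lyap_op_transpose_symmetric[OF Q_symmetric]
        lyap_scaleR[OF inj_lyap_op_transpose])
qed

lemma cost_has_derivative: "(cost has_derivative cost_grad x) (at x)"
proof -
  have "(cost has_derivative (\<lambda>h. inner V (2 *\<^sub>R lyap (Acl x) (symp (K h ** P x))))) (at x)"
    unfolding cost_def[abs_def]
    by (rule bounded_linear.has_derivative[OF bounded_linear_inner_right P_has_derivative])
  moreover have "inner V (2 *\<^sub>R lyap (Acl x) (symp (K h ** P x))) = cost_grad x h" for h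
    by (simp add: cost_grad_def inner_lyap_transpose[OF inj_lyap_op inj_lyap_op_transpose]
        inner_symp_right[OF Q_symmetric] flip: Q_def)
  ultimately show ?thesis
    by simp
qed

lemma cost_grad_has_derivative:
  "((\<lambda>y. cost_grad y h1) has_derivative
      (\<lambda>h2. 4 * inner (K h1) (hess_op (Acl x) (P x) (Q x) (K h2)))) (at x)"
proof -
  let ?Nf = "\<lambda>h. lyap (Acl x) (symp (K h ** P x))"
  let ?Nb = "\<lambda>h. lyap (transpose (Acl x)) (symp (Q x ** K h))"
  have "((\<lambda>y. K h1 ** P y) has_derivative (\<lambda>h. K h1 ** (2 *\<^sub>R ?Nf h))) (at x)"
    by (rule bounded_linear.has_derivative[OF bounded_linear_matrix_mult_left P_has_derivative])
  from has_derivative_mult_right[OF has_derivative_inner[OF Q_has_derivative this], of 2]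
  have "((\<lambda>y. cost_grad y h1) has_derivative
      (\<lambda>h. 2 * (inner (Q x) (K h1 ** (2 *\<^sub>R ?Nf h))
        + inner (2 *\<^sub>R ?Nb h) (K h1 ** P x)))) (at x)"
    by (simp add: cost_grad_def[abs_def])
  moreover have "inner (Q x) (K h1 ** ?Nf h) = inner (K h1) (Q x ** ?Nf h)" for h
    using lyap_symmetric[OF inj_lyap_op symp_transpose[of "K h ** P x"]]
    by (simp add: inner_commute[of "Q x"] inner_matrix_mult_right Q_symmetric)
  moreover have "inner (?Nb h) (K h1 ** P x) = inner (K h1) (?Nb h ** P x)" for h
    by (simp add: inner_commute[of "?Nb h"] inner_matrix_mult_right P_symmetric)
  ultimately show ?thesis
    by (simp add: hess_op_def matrix_scalar_ac algebra_simps flip: scalar_matrix_assoc)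
qed

end

end

section \<open>The closed-loop system\<close>

lemma linear_calJ: "linear calJ"
  by (rule linearI) (simp_all add: calJ_def matrix_add_ldistrib matrix_add_rdistrib
      matrix_scalar_ac scalar_matrix_assoc[symmetric])

lemma calJ_eq_blk: "calJ M = blk 0 0 0 (canonJ ** M)"
  by (auto simp: vec_eq_iff blk_def calJ_def vstack_def hstack_def matrix_matrix_mult_def mat_def
      if_distrib cong: if_cong split: sum.split)

lemma clA_affine: "clA A B2 C D b R' = clA A B2 C D b R + calJ (R' - R)"
proof -
  have "ctrl_a D b R' = ctrl_a D b R + canonJ ** (R' - R)"
    by (simp add: ctrl_a_def matrix_diff_ldistrib)
  then show ?thesis
    by (simp add: clA_def calJ_eq_blk blk_def vec_eq_iff split: sum.split)
qed

lemma calJ_adj_eq: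
  "calJ_adj X = symp (transpose (vstack 0 canonJ) ** X ** transpose (hstack 0 (mat 1)))"
  unfolding calJ_adj_def
proof (rule the_equality)
  let ?Y = "symp (transpose (vstack 0 canonJ) ** X ** transpose (hstack 0 (mat 1)))"
  have adj: "inner (calJ M) X = inner M ?Y" if "M \<in> symm_mats" for M
    using that by (simp add: calJ_def inner_matrix_sandwich symm_mats_def inner_symp_right)
  then show "?Y \<in> symm_mats \<and> (\<forall>M\<in>symm_mats. inner (calJ M) X = inner M ?Y)"
    by (simp add: symm_mats_def)
  fix Y assume Y: "Y \<in> symm_mats \<and> (\<forall>M\<in>symm_mats. inner (calJ M) X = inner M Y)"
  then have "Y - ?Y \<in> symm_mats"
    by (simp add: symm_mats_def)
  with Y adj have "inner (Y - ?Y) (Y - ?Y) = 0"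
    by (simp add: inner_diff_right)
  then show "Y = ?Y"
    by simp
qed

lemma calJ_adj_symmetric: "transpose (calJ_adj X) = calJ_adj X"
  by (simp add: calJ_adj_eq)

lemma inner_calJ_adj: "M \<in> symm_mats \<Longrightarrow> inner M (calJ_adj X) = inner (calJ M) X"
  by (simp add: calJ_adj_eq calJ_def symm_mats_def inner_symp_right inner_matrix_sandwich)

lemma costE_eq_inner:
  "costE A B1 B2 C D C0 D0 b R
    = inner (transpose (clC C0 D0 b) ** clC C0 D0 b) (gramP A B1 B2 C D b R)"
  by (simp add: costE_def trace_sandwich_eq_inner)

lemma hessE_symmetric: "hessE A B1 B2 C D C0 D0 b R M \<in> symm_mats"
  by (simp add: hessE_def Let_def symm_mats_def transpose_scalar calJ_adj_symmetric)

lemma inner_hessE: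
  assumes "M1 \<in> symm_mats"
  shows "inner M1 (hessE A B1 B2 C D C0 D0 b R M2) = 4 * inner (calJ M1)
    (hess_op (clA A B2 C D b R) (gramP A B1 B2 C D b R) (gramQ A B2 C D C0 D0 b R) (calJ M2))"
  using assms by (simp add: hessE_def Let_def hess_op_def inner_calJ_adj)

theorem lemma5:
  fixes A :: "real^('n::{finite,linorder})^('n::{finite,linorder})"
    and B1 :: "real^('m1::{finite,linorder})^('n::{finite,linorder})"
    and B2 :: "real^('m2::{finite,linorder})^('n::{finite,linorder})"
    and C :: "real^('n::{finite,linorder})^('p::finite)"
    and D :: "real^('m1::{finite,linorder})^('p::finite)"
    and C0 :: "real^('n::{finite,linorder})^('p0::finite)"
    and D0 :: "real^('m2::{finite,linorder})^('p0::finite)"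
    and b :: "real^(('m2::{finite,linorder}) + ('p::finite))^('n::{finite,linorder})"
  assumes "even CARD(('n::{finite,linorder}))" and "even CARD(('m1::{finite,linorder}))" and "even CARD(('m2::{finite,linorder}))"
  shows "\<exists>DE. (\<forall>R\<in>symm_mats. hurwitz (clA A B2 C D b R) \<longrightarrow>
              (costE A B1 B2 C D C0 D0 b has_derivative DE R) (at R within symm_mats))
          \<and> (\<forall>R\<in>symm_mats. hurwitz (clA A B2 C D b R) \<longrightarrow>
              (\<forall>M1\<in>symm_mats.
                 ((\<lambda>R'. DE R' M1) has_derivative
                    (\<lambda>M2. inner M1 (hessE A B1 B2 C D C0 D0 b R M2))) (at R within symm_mats)))
          \<and> (\<forall>R\<in>symm_mats. hurwitz (clA A B2 C D b R) \<longrightarrow>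
              (\<forall>M1\<in>symm_mats. \<forall>M2\<in>symm_mats.
                 hessE A B1 B2 C D C0 D0 b R M1 \<in> symm_mats \<and>
                 inner M1 (hessE A B1 B2 C D C0 D0 b R M2) = inner (hessE A B1 B2 C D C0 D0 b R M1) M2))"
proof -
  define W where "W = clB B1 B2 D b ** transpose (clB B1 B2 D b)"
  define V where "V = transpose (clC C0 D0 b) ** clC C0 D0 b"
  interpret lyapunov_cost "clA A B2 C D b" calJ W V
    by (rule lyapunov_cost.intro) (simp_all add: W_def V_def linear_calJ clA_affine
        matrix_transpose_mul)
  have PQ: "gramP A B1 B2 C D b = P" "gramQ A B2 C D C0 D0 b = Q"
    by (simp_all add: fun_eq_iff P_def Q_def gramP_def gramQ_def flip: W_def V_def)
  have cost: "costE A B1 B2 C D C0 D0 b = cost"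
    by (simp add: fun_eq_iff costE_eq_inner cost_def PQ flip: V_def)
  have "(costE A B1 B2 C D C0 D0 b has_derivative cost_grad R) (at R)"
    if "hurwitz (clA A B2 C D b R)" for R
    using cost_has_derivative[OF that] by (simp add: cost)
  moreover have "((\<lambda>R'. cost_grad R' M1) has_derivative
      (\<lambda>M2. inner M1 (hessE A B1 B2 C D C0 D0 b R M2))) (at R)"
    if "hurwitz (clA A B2 C D b R)" "M1 \<in> symm_mats" for R M1
    using cost_grad_has_derivative[OF that(1)] by (simp add: inner_hessE[OF that(2)] PQ)
  moreover have "inner M1 (hessE A B1 B2 C D C0 D0 b R M2)
      = inner (hessE A B1 B2 C D C0 D0 b R M1) M2"
    if R: "hurwitz (clA A B2 C D b R)" and "M1 \<in> symm_mats" "M2 \<in> symm_mats" for R M1 M2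
    using inner_hess_op_commute[OF inj_lyap_op[OF R] inj_lyap_op_transpose[OF R]
        P_symmetric[OF R] Q_symmetric[OF R]] that(2,3)
    by (simp add: inner_hessE PQ inner_commute[of _ M2])
  ultimately show ?thesis
    using hessE_symmetric by (blast intro: has_derivative_at_withinI)
qed

end
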